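(* Let $P\subseteq\mathbb{R}^n$ be an $n$-dimensional polytope such that $*P$ is a grounded almost-pillar, and let $F$ be the unique bottom face of $P$. Then there exist a pillar $Q$ and a grounded almost-pillar $S$ in $\mathbb{R}^n$ such that in $\mathcal{P}(\mathbb{R}^n)$ \[ P=Q+F-S. \]
   Context: $\mathcal{P}(\mathbb{R}^n)$ is the Grothendieck group of polytopes (convex hulls of nonempty finite sets) under Minkowski sum; $*P=\{-p:p\in P\}$. Let $\mathbf{z}=(0,\dots,0,1)$, $Z=\mathrm{hull}\{0,\mathbf{z}\}$. A polytope is flat if it lies in a translate of $\mathbf{z}^\perp$. For an $n$-dimensional polytope $P$, a codimension-1 face $F=\{p\in P:\phi(p)=\max_P\phi\}$ (with $\phi$ unique up to positive scalar) is a bottom/vertical/top face according as $\phi(\mathbf{z})<0,=0,>0$. An $n$-dimensional polytope is grounded if it has exactly one bottom face and it is flat; a pillar if it equals $Q+k\cdot Z$ for a flat polytope $Q$ and $k>0$; an almost-pillar if it has exactly one bottom face and exactly one top face. *)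

theory Defs
  imports "HOL-Analysis.Analysis"
begin

text \<open>Ambient space R^n: real^'n with a well-ordered finite index type; the
last coordinate is the greatest index.\<close>

definition zvec :: "real^'n::{finite,wellorder}" where
  "zvec = axis (GREATEST i. True) 1"

definition ptope :: "(real^'n::{finite,wellorder}) set \<Rightarrow> bool" where
  "ptope P \<longleftrightarrow> (\<exists>V. finite V \<and> V \<noteq> {} \<and> P = convex hull V)"

definition msum :: "(real^'n::{finite,wellorder}) set \<Rightarrow> (real^'n::{finite,wellorder}) set \<Rightarrow> (real^'n::{finite,wellorder}) set" where
  "msum A B = {a + b | a b. a \<in> A \<and> b \<in> B}"

definition reflect :: "(real^'n::{finite,wellorder}) set \<Rightarrow> (real^'n::{finite,wellorder}) set" where
  "reflect P = uminus ` P"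

definition ndim :: "(real^'n::{finite,wellorder}) set \<Rightarrow> bool" where
  "ndim P \<longleftrightarrow> ptope P \<and> aff_dim P = int CARD('n)"

definition flat :: "(real^'n::{finite,wellorder}) set \<Rightarrow> bool" where
  "flat A \<longleftrightarrow> (\<exists>c. \<forall>p\<in>A. inner p zvec = c)"

definition facet_dir :: "(real^'n::{finite,wellorder}) set \<Rightarrow> (real^'n::{finite,wellorder}) set \<Rightarrow> real^'n::{finite,wellorder} \<Rightarrow> bool" where
  "facet_dir P F phi \<longleftrightarrow> F facet_of P \<and> phi \<noteq> 0 \<and>
     F = {p \<in> P. \<forall>q\<in>P. inner phi q \<le> inner phi p}"

definition bottom_face :: "(real^'n::{finite,wellorder}) set \<Rightarrow> (real^'n::{finite,wellorder}) set \<Rightarrow> bool" where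
  "bottom_face P F \<longleftrightarrow> (\<exists>phi. facet_dir P F phi \<and> inner phi zvec < 0)"

definition top_face :: "(real^'n::{finite,wellorder}) set \<Rightarrow> (real^'n::{finite,wellorder}) set \<Rightarrow> bool" where
  "top_face P F \<longleftrightarrow> (\<exists>phi. facet_dir P F phi \<and> inner phi zvec > 0)"

definition grounded :: "(real^'n::{finite,wellorder}) set \<Rightarrow> bool" where
  "grounded P \<longleftrightarrow> ndim P \<and> (\<exists>!F. bottom_face P F) \<and> (\<forall>F. bottom_face P F \<longrightarrow> flat F)"

definition pillar :: "(real^'n::{finite,wellorder}) set \<Rightarrow> bool" where
  "pillar P \<longleftrightarrow> ndim P \<and>
     (\<exists>Q k. ptope Q \<and> flat Q \<and> k > 0 \<and> P = msum Q (closed_segment 0 (k *\<^sub>R zvec)))"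

definition almost_pillar :: "(real^'n::{finite,wellorder}) set \<Rightarrow> bool" where
  "almost_pillar P \<longleftrightarrow> ndim P \<and> (\<exists>!F. bottom_face P F) \<and> (\<exists>!F. top_face P F)"

text \<open>Equality of classes [A] = [B] in the Grothendieck group of polytopes
  under Minkowski sum (literal definition for a commutative monoid).\<close>
definition groth_eq :: "(real^'n::{finite,wellorder}) set \<Rightarrow> (real^'n::{finite,wellorder}) set \<Rightarrow> bool" where
  "groth_eq A B \<longleftrightarrow> (\<exists>R. ptope R \<and> msum A R = msum B R)"

end

theory Submission
  imports Defs
begin

text \<open>
  The top faces of \<open>P\<close> are reflections of the unique bottom face of \<open>*P\<close>, which is flat, so they all
  lie at one height \<open>h\<close>. A vertical line through \<open>P\<close> leaves it through a facet in each direction,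
  hence through \<open>F\<close> downwards and at height \<open>h\<close> upwards: \<open>P\<close> is the set of points between the
  graph \<open>F\<close> and the level \<open>h\<close>. Choosing a level \<open>b\<close> below \<open>F\<close>, let \<open>S\<close> be the region between
  level \<open>b\<close> and \<open>F\<close>, and \<open>Q\<close> the region between levels \<open>b\<close> and \<open>h\<close>, a pillar over the projection
  of \<open>F\<close> to level \<open>b\<close>. Cutting a vertical segment where it crosses \<open>F\<close> shows \<open>P + S = Q + F\<close>.
\<close>

lemma zvec_inner_self [simp]: "zvec \<bullet> (zvec :: real^'n::{finite,wellorder}) = 1"
  by (simp add: zvec_def inner_axis_axis)

lemma zvec_nonzero [simp]: "(zvec :: real^'n::{finite,wellorder}) \<noteq> 0"
  by (metis inner_zero_left zero_neq_one zvec_inner_self)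

lemma ptope_iff_polytope: "ptope P \<longleftrightarrow> polytope P \<and> P \<noteq> {}"
  unfolding ptope_def polytope_def by auto

lemma groth_eq_refl: "groth_eq A A"
  unfolding groth_eq_def ptope_def by (intro exI[of _ "{0}"]) auto

lemma argmax_eq_supporting_hyperplane:
  fixes A :: "'a::real_inner set"
  assumes "\<And>x. x \<in> A \<Longrightarrow> a \<bullet> x \<le> c" and "A \<inter> {x. a \<bullet> x = c} \<noteq> {}"
  shows "{p \<in> A. \<forall>q\<in>A. a \<bullet> q \<le> a \<bullet> p} = A \<inter> {x. a \<bullet> x = c}"
proof -
  obtain y where "y \<in> A" "a \<bullet> y = c"
    using assms(2) by auto
  then show ?thesis
    using assms(1) by (auto intro: antisym)
qed

lemma facet_of_subset_eq:
  assumes "G facet_of X" and "H facet_of X" and "G \<subseteq> H"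
  shows "G = H"
proof (rule ccontr)
  assume "G \<noteq> H"
  moreover have "G face_of H"
    using assms face_of_subset facet_of_imp_face_of facet_of_imp_subset by blast
  moreover have "convex H"
    using assms(2) face_of_imp_convex facet_of_imp_face_of by blast
  ultimately have "aff_dim G < aff_dim H"
    using face_of_aff_dim_lt by blast
  then show False
    using assms(1,2) by (simp add: facet_of_def)
qed

lemma finite_halfspaces_step_along:
  fixes a :: "'i \<Rightarrow> 'a::real_inner"
  assumes "finite I" and "\<And>i. i \<in> I \<Longrightarrow> a i \<bullet> p \<le> b i"
    and "\<And>i. i \<in> I \<Longrightarrow> a i \<bullet> w > 0 \<Longrightarrow> a i \<bullet> p < b i"
  obtains e where "e > 0" and "\<And>i. i \<in> I \<Longrightarrow> a i \<bullet> (p + e *\<^sub>R w) \<le> b i"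
proof -
  have "\<forall>\<^sub>F e in at_right 0. a i \<bullet> (p + e *\<^sub>R w) \<le> b i" if "i \<in> I" for i
  proof (cases "a i \<bullet> w > 0")
    case True
    have "((\<lambda>e. a i \<bullet> (p + e *\<^sub>R w)) \<longlongrightarrow> a i \<bullet> (p + 0 *\<^sub>R w)) (at_right 0)"
      by (intro tendsto_intros)
    then have "\<forall>\<^sub>F e in at_right 0. a i \<bullet> (p + e *\<^sub>R w) < b i"
      using assms(3)[OF that True] by (simp add: order_tendstoD(2))
    then show ?thesis
      by (rule eventually_mono) simp
  next
    case False
    show ?thesis
      using eventually_at_right_less
    proof (rule eventually_mono)
      fix e :: real assume "0 < e"
      then have "e * (a i \<bullet> w) \<le> 0"
        using False by (simp add: mult_nonneg_nonpos)
      then show "a i \<bullet> (p + e *\<^sub>R w) \<le> b i"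
        using assms(2)[OF that] by (simp add: inner_add_right)
    qed
  qed
  then have "\<forall>\<^sub>F e in at_right 0. \<forall>i\<in>I. a i \<bullet> (p + e *\<^sub>R w) \<le> b i"
    using assms(1) by (simp add: eventually_ball_finite)
  then have "\<forall>\<^sub>F e in at_right 0. 0 < e \<and> (\<forall>i\<in>I. a i \<bullet> (p + e *\<^sub>R w) \<le> b i)"
    using eventually_at_right_less by (rule eventually_conj[rotated])
  then show ?thesis
    using that eventually_happens'[OF trivial_limit_at_right_real] by blast
qed

lemma polyhedron_exit_facet:
  fixes P :: "'a::euclidean_space set"
  assumes "polyhedron P" and "affine hull P = UNIV" and "p \<in> P"
    and "\<And>e. e > 0 \<Longrightarrow> p + e *\<^sub>R w \<notin> P"
  obtains G phi where "G facet_of P" "phi \<noteq> 0" "G = {q \<in> P. \<forall>r\<in>P. phi \<bullet> r \<le> phi \<bullet> q}"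
    "phi \<bullet> w > 0" "p \<in> G"
proof -
  obtain Fs where fin: "finite Fs" and seq: "P = affine hull P \<inter> \<Inter>Fs"
    and "\<And>h. h \<in> Fs \<Longrightarrow> \<exists>a b. a \<noteq> 0 \<and> h = {x. a \<bullet> x \<le> b}"
    and min: "\<And>F'. F' \<subset> Fs \<Longrightarrow> P \<subset> affine hull P \<inter> \<Inter>F'"
    using assms(1) by (simp add: polyhedron_Int_affine_minimal) meson
  then obtain a b where ab: "\<And>h. h \<in> Fs \<Longrightarrow> a h \<noteq> 0 \<and> h = {x. a h \<bullet> x \<le> b h}"
    by metis
  have P_eq: "P = \<Inter>Fs"
    using seq assms(2) by simp
  have p_le: "a h \<bullet> p \<le> b h" if "h \<in> Fs" for h
    using assms(3) P_eq ab that by blast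
  have "\<exists>h\<in>Fs. a h \<bullet> w > 0 \<and> a h \<bullet> p = b h"
  proof (rule ccontr)
    assume "\<not> ?thesis"
    then have strict: "a h \<bullet> p < b h" if "h \<in> Fs" "a h \<bullet> w > 0" for h
      using p_le that order_less_le by blast
    obtain e where "e > 0" and "\<And>h. h \<in> Fs \<Longrightarrow> a h \<bullet> (p + e *\<^sub>R w) \<le> b h"
      by (rule finite_halfspaces_step_along[of Fs a p b w]) (use fin p_le strict in blast)+
    then have "p + e *\<^sub>R w \<in> P"
      using P_eq ab by blast
    with assms(4) \<open>e > 0\<close> show False
      by blast
  qed
  then obtain h where h: "h \<in> Fs" "a h \<bullet> w > 0" "a h \<bullet> p = b h"
    by blast
  have G: "{q \<in> P. \<forall>r\<in>P. a h \<bullet> r \<le> a h \<bullet> q} = P \<inter> {x. a h \<bullet> x = b h}"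
    using P_eq ab h assms(3) by (intro argmax_eq_supporting_hyperplane) blast+
  have "P \<inter> {x. a h \<bullet> x = b h} facet_of P"
    using facet_of_polyhedron_explicit[OF fin seq ab min] h(1) by blast
  then show ?thesis
    using that[OF _ _ G[symmetric]] ab h assms(3) by blast
qed

lemma compact_ray_last_point:
  fixes P :: "'a::real_normed_vector set"
  assumes "compact P" and "p \<in> P" and "w \<noteq> 0"
  obtains t where "t \<ge> 0" "p + t *\<^sub>R w \<in> P" "\<And>e. e > 0 \<Longrightarrow> (p + t *\<^sub>R w) + e *\<^sub>R w \<notin> P"
proof -
  define T where "T = {0..} \<inter> (\<lambda>t. p + t *\<^sub>R w) -` P"
  have "closed T"
    unfolding T_def using assms(1)
    by (intro closed_Int closed_real_atLeast continuous_closed_vimage compact_imp_closed)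
      (auto intro: continuous_intros)
  moreover have "bounded T"
  proof -
    obtain r where r: "\<And>x. x \<in> P \<Longrightarrow> norm x \<le> r"
      using compact_imp_bounded[OF assms(1)] bounded_iff by blast
    have "norm t \<le> 2 * r / norm w" if "t \<in> T" for t
    proof -
      have t: "0 \<le> t" "p + t *\<^sub>R w \<in> P"
        using that by (auto simp: T_def)
      have "t * norm w = norm ((p + t *\<^sub>R w) - p)"
        using t(1) by simp
      also have "\<dots> \<le> 2 * r"
        using norm_triangle_ineq4[of "p + t *\<^sub>R w" p] r[OF t(2)] r[OF assms(2)] by linarith
      finally show ?thesis
        using t(1) assms(3) by (simp add: pos_le_divide_eq)
    qed
    then show ?thesis
      unfolding bounded_iff by blast
  qed
  moreover have "0 \<in> T"
    using assms(2) by (simp add: T_def)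
  ultimately obtain t where t: "t \<in> T" "\<And>s. s \<in> T \<Longrightarrow> s \<le> t"
    using compact_attains_sup[of T] compact_eq_bounded_closed by blast
  show ?thesis
  proof (rule that)
    show "0 \<le> t" "p + t *\<^sub>R w \<in> P"
      using t(1) by (auto simp: T_def)
    show "(p + t *\<^sub>R w) + e *\<^sub>R w \<notin> P" if "e > 0" for e
    proof
      assume "(p + t *\<^sub>R w) + e *\<^sub>R w \<in> P"
      then have "t + e \<in> T"
        using \<open>0 \<le> t\<close> that by (simp add: T_def scaleR_add_left add.assoc)
      then show False
        using t(2) that by force
    qed
  qed
qed

lemma ray_exits_through_facet:
  fixes P :: "(real^'n::{finite,wellorder}) set"
  assumes "polytope P" and "aff_dim P = CARD('n)" and "p \<in> P" and "w \<noteq> 0"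
  obtains t G phi where "t \<ge> 0" "facet_dir P G phi" "phi \<bullet> w > 0" "p + t *\<^sub>R w \<in> G"
proof -
  obtain t where t: "t \<ge> 0" "p + t *\<^sub>R w \<in> P" "\<And>e. e > 0 \<Longrightarrow> (p + t *\<^sub>R w) + e *\<^sub>R w \<notin> P"
    using compact_ray_last_point[OF polytope_imp_compact[OF assms(1)] assms(3,4)] by blast
  have "affine hull P = UNIV"
    using assms(2) aff_dim_eq_full by fastforce
  then obtain G phi where "G facet_of P" "phi \<noteq> 0" "G = {q \<in> P. \<forall>r\<in>P. phi \<bullet> r \<le> phi \<bullet> q}"
    "phi \<bullet> w > 0" "p + t *\<^sub>R w \<in> G"
    using polyhedron_exit_facet[OF polytope_imp_polyhedron[OF assms(1)] _ t(2,3)] by blast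
  then show ?thesis
    using that t(1) unfolding facet_dir_def by blast
qed

lemma facet_dir_reflect:
  assumes "facet_dir P G phi"
  shows "facet_dir (reflect P) (reflect G) (- phi)"
proof -
  have lin: "linear (uminus :: real^'n \<Rightarrow> real^'n)" and inj: "inj (uminus :: real^'n \<Rightarrow> real^'n)"
    by (simp_all add: linear_uminus)
  have "G facet_of P"
    using assms unfolding facet_dir_def by blast
  then have "reflect G facet_of reflect P"
    unfolding facet_of_def reflect_def face_of_linear_image[OF lin inj]
      aff_dim_injective_linear_image[OF lin inj] by simp
  then show ?thesis
    using assms unfolding facet_dir_def reflect_def by (auto simp: image_iff)
qed

lemma top_faces_level:
  assumes "grounded (reflect P)"
  obtains h where "\<And>G p. top_face P G \<Longrightarrow> p \<in> G \<Longrightarrow> p \<bullet> zvec = h"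
proof -
  obtain B where B: "bottom_face (reflect P) B" "\<And>G. bottom_face (reflect P) G \<Longrightarrow> G = B"
    using assms unfolding grounded_def by metis
  then obtain c where c: "\<And>q. q \<in> B \<Longrightarrow> q \<bullet> zvec = c"
    using assms unfolding grounded_def flat_def by (metis inner_commute)
  have "p \<bullet> zvec = - c" if top: "top_face P G" and "p \<in> G" for G p
  proof -
    obtain phi where "facet_dir P G phi" "phi \<bullet> zvec > 0"
      using top unfolding top_face_def by blast
    then have "bottom_face (reflect P) (reflect G)"
      unfolding bottom_face_def using facet_dir_reflect by force
    then have "- p \<in> B"
      using B(2) \<open>p \<in> G\<close> unfolding reflect_def by blast
    then show ?thesis
      using c by force
  qed
  then show ?thesis
    using that by blast
qed

lemma closed_segment_along:
  fixes w :: "'a::real_vector"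
  assumes "l \<le> u"
  shows "closed_segment (x + l *\<^sub>R w) (x + u *\<^sub>R w) = (\<lambda>t. x + t *\<^sub>R w) ` {l..u}"
  using closed_segment_linear_image[of "\<lambda>t. t *\<^sub>R w" l u] linear_scaleR_left
    closed_segment_eq_real_ivl1[OF assms]
  by (simp add: closed_segment_translation image_image)

definition slab_over :: "'a::real_vector \<Rightarrow> 'a set \<Rightarrow> ('a \<Rightarrow> real) \<Rightarrow> ('a \<Rightarrow> real) \<Rightarrow> 'a set" where
  "slab_over w A l u = {x + t *\<^sub>R w | x t. x \<in> A \<and> l x \<le> t \<and> t \<le> u x}"

lemma mem_slab_over:
  "y \<in> slab_over w A l u \<longleftrightarrow> (\<exists>x\<in>A. \<exists>t. y = x + t *\<^sub>R w \<and> l x \<le> t \<and> t \<le> u x)"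
  by (auto simp: slab_over_def)

lemma slab_over_memI: "x \<in> A \<Longrightarrow> l x \<le> t \<Longrightarrow> t \<le> u x \<Longrightarrow> x + t *\<^sub>R w \<in> slab_over w A l u"
  by (auto simp: mem_slab_over)

lemma slab_over_uminus: "slab_over (- w) A (\<lambda>x. - u x) (\<lambda>x. - l x) = slab_over w A l u"
proof (rule set_eqI, unfold mem_slab_over, intro iffI; elim bexE exE conjE)
  fix y x t
  assume "x \<in> A" "y = x + t *\<^sub>R (- w)" "- u x \<le> t" "t \<le> - l x"
  then show "\<exists>x\<in>A. \<exists>t. y = x + t *\<^sub>R w \<and> l x \<le> t \<and> t \<le> u x"
    by (intro bexI[of _ x] exI[of _ "- t"]) auto
next
  fix y x t
  assume "x \<in> A" "y = x + t *\<^sub>R w" "l x \<le> t" "t \<le> u x"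
  then show "\<exists>x\<in>A. \<exists>t. y = x + t *\<^sub>R (- w) \<and> - u x \<le> t \<and> t \<le> - l x"
    by (intro bexI[of _ x] exI[of _ "- t"]) auto
qed

lemma graph_subset_slab_over:
  "(\<And>x. x \<in> A \<Longrightarrow> l x \<le> u x) \<Longrightarrow> (\<lambda>x. x + l x *\<^sub>R w) ` A \<subseteq> slab_over w A l u"
  "(\<And>x. x \<in> A \<Longrightarrow> l x \<le> u x) \<Longrightarrow> (\<lambda>x. x + u x *\<^sub>R w) ` A \<subseteq> slab_over w A l u"
  by (auto intro: slab_over_memI)

lemma slab_over_constant_height:
  fixes w :: "real^'n::{finite,wellorder}"
  assumes "k \<ge> 0" and u: "\<And>x. x \<in> A \<Longrightarrow> u x = l x + k"
  shows "slab_over w A l u = msum ((\<lambda>x. x + l x *\<^sub>R w) ` A) (closed_segment 0 (k *\<^sub>R w))"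
proof (rule set_eqI)
  have seg: "closed_segment 0 (k *\<^sub>R w) = (\<lambda>s. s *\<^sub>R w) ` {0..k}"
    using closed_segment_along[OF assms(1), of 0 w] by simp
  fix y
  show "y \<in> slab_over w A l u \<longleftrightarrow> y \<in> msum ((\<lambda>x. x + l x *\<^sub>R w) ` A) (closed_segment 0 (k *\<^sub>R w))"
    unfolding msum_def seg mem_Collect_eq
  proof
    assume "y \<in> slab_over w A l u"
    then obtain x t where "x \<in> A" "y = x + t *\<^sub>R w" "l x \<le> t" "t \<le> u x"
      unfolding mem_slab_over by blast
    then show "\<exists>a b. y = a + b \<and> a \<in> (\<lambda>x. x + l x *\<^sub>R w) ` A \<and> b \<in> (\<lambda>s. s *\<^sub>R w) ` {0..k}"
      using u by (intro exI[of _ "x + l x *\<^sub>R w"] exI[of _ "(t - l x) *\<^sub>R w"] conjI imageI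
          image_eqI[of _ _ "t - l x"]) (auto simp: algebra_simps)
  next
    assume "\<exists>a b. y = a + b \<and> a \<in> (\<lambda>x. x + l x *\<^sub>R w) ` A \<and> b \<in> (\<lambda>s. s *\<^sub>R w) ` {0..k}"
    then obtain x s where "x \<in> A" "y = (x + l x *\<^sub>R w) + s *\<^sub>R w" "0 \<le> s" "s \<le> k"
      by force
    then show "y \<in> slab_over w A l u"
      using u slab_over_memI[of x A l "l x + s" u w] by (simp add: algebra_simps)
  qed
qed

lemma affine_combination_inner:
  fixes v x y :: "'a::real_inner"
  assumes "a + b = 1"
  shows "v \<bullet> (a *\<^sub>R x + b *\<^sub>R y) + c = a * (v \<bullet> x + c) + b * (v \<bullet> y + c)"
proof -
  have "a * (v \<bullet> x + c) + b * (v \<bullet> y + c) = v \<bullet> (a *\<^sub>R x + b *\<^sub>R y) + (a + b) * c"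
    by (simp add: inner_add_right algebra_simps)
  then show ?thesis
    using assms by simp
qed

lemma convex_slab_over:
  fixes w :: "'a::real_inner"
  assumes "convex A" and l: "\<And>x. l x = v1 \<bullet> x + c1" and u: "\<And>x. u x = v2 \<bullet> x + c2"
  shows "convex (slab_over w A l u)"
proof (rule convexI)
  fix y1 y2 and a b :: real
  assume "y1 \<in> slab_over w A l u" "y2 \<in> slab_over w A l u" and ab: "0 \<le> a" "0 \<le> b" "a + b = 1"
  then obtain x1 t1 x2 t2 where
    y: "y1 = x1 + t1 *\<^sub>R w" "y2 = x2 + t2 *\<^sub>R w" "x1 \<in> A" "x2 \<in> A"
    and t: "l x1 \<le> t1" "t1 \<le> u x1" "l x2 \<le> t2" "t2 \<le> u x2"
    unfolding mem_slab_over by blast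
  have "a *\<^sub>R y1 + b *\<^sub>R y2 = (a *\<^sub>R x1 + b *\<^sub>R x2) + (a * t1 + b * t2) *\<^sub>R w"
    unfolding y by (simp add: algebra_simps)
  moreover have "a *\<^sub>R x1 + b *\<^sub>R x2 \<in> A"
    using assms(1) y ab by (simp add: convexD)
  moreover have "l (a *\<^sub>R x1 + b *\<^sub>R x2) \<le> a * t1 + b * t2"
    unfolding l affine_combination_inner[OF ab(3)] using t ab
    by (intro add_mono mult_left_mono) (simp_all add: l)
  moreover have "a * t1 + b * t2 \<le> u (a *\<^sub>R x1 + b *\<^sub>R x2)"
    unfolding u affine_combination_inner[OF ab(3)] using t ab
    by (intro add_mono mult_left_mono) (simp_all add: u)
  ultimately show "a *\<^sub>R y1 + b *\<^sub>R y2 \<in> slab_over w A l u"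
    unfolding mem_slab_over by blast
qed

lemma shear_eq_translation_linear:
  "(\<lambda>x. x + (v \<bullet> x + c) *\<^sub>R w) = (\<lambda>y. c *\<^sub>R w + y) \<circ> (\<lambda>x. x + (v \<bullet> x) *\<^sub>R w)"
  and linear_shear: "linear (\<lambda>x. x + (v \<bullet> x) *\<^sub>R w)"
  by (auto simp: linear_iff inner_add_right algebra_simps)

lemma convex_hull_shear_image:
  assumes "\<And>x. l x = v \<bullet> x + c"
  shows "(\<lambda>x. x + l x *\<^sub>R w) ` (convex hull V) = convex hull ((\<lambda>x. x + l x *\<^sub>R w) ` V)"
  unfolding assms shear_eq_translation_linear image_comp[symmetric]
  by (simp add: convex_hull_linear_image[OF linear_shear] convex_hull_translation)

lemma aff_dim_shear_image_le:
  fixes A :: "'a::euclidean_space set"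
  assumes "\<And>x. l x = v \<bullet> x + c"
  shows "aff_dim ((\<lambda>x. x + l x *\<^sub>R w) ` A) \<le> aff_dim A"
  unfolding assms shear_eq_translation_linear image_comp[symmetric]
  using aff_dim_linear_image_le[OF linear_shear, of v w A] by (simp add: aff_dim_translation_eq)

text \<open>On a hyperplane transversal to \<open>w\<close>, shearing along \<open>w\<close> is undone by another shear.\<close>

lemma aff_dim_shear_image_eq:
  fixes A :: "'a::euclidean_space set"
  assumes l: "\<And>x. l x = v \<bullet> x + c" and hyp: "\<And>x. x \<in> A \<Longrightarrow> a \<bullet> x = d" and "a \<bullet> w \<noteq> 0"
  shows "aff_dim ((\<lambda>x. x + l x *\<^sub>R w) ` A) = aff_dim A"
proof (rule antisym)
  show "aff_dim ((\<lambda>x. x + l x *\<^sub>R w) ` A) \<le> aff_dim A"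
    using aff_dim_shear_image_le l by blast
  define shift_back where "shift_back y = (- (1 / (a \<bullet> w)) *\<^sub>R a) \<bullet> y + d / (a \<bullet> w)" for y
  have "y + shift_back y *\<^sub>R w = x" if "x \<in> A" "y = x + l x *\<^sub>R w" for x y
  proof -
    have "shift_back y = - l x"
      using that hyp[OF that(1)] \<open>a \<bullet> w \<noteq> 0\<close>
      by (simp add: shift_back_def inner_add_right field_simps)
    then show ?thesis
      using that(2) by simp
  qed
  then have "(\<lambda>y. y + shift_back y *\<^sub>R w) ` (\<lambda>x. x + l x *\<^sub>R w) ` A = id ` A"
    unfolding image_image by (intro image_cong) auto
  then have "A = (\<lambda>y. y + shift_back y *\<^sub>R w) ` (\<lambda>x. x + l x *\<^sub>R w) ` A"
    by simp
  then show "aff_dim A \<le> aff_dim ((\<lambda>x. x + l x *\<^sub>R w) ` A)"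
    using aff_dim_shear_image_le[of shift_back] shift_back_def by metis
qed

lemma convex_hull_slab_over:
  fixes w :: "'a::real_inner"
  assumes l: "\<And>x. l x = v1 \<bullet> x + c1" and u: "\<And>x. u x = v2 \<bullet> x + c2"
    and le: "\<And>x. x \<in> convex hull V \<Longrightarrow> l x \<le> u x"
  shows "slab_over w (convex hull V) l u
    = convex hull ((\<lambda>x. x + l x *\<^sub>R w) ` V \<union> (\<lambda>x. x + u x *\<^sub>R w) ` V)" (is "_ = convex hull ?E")
proof
  have "(\<lambda>x. x + l x *\<^sub>R w) ` (convex hull V) \<subseteq> convex hull ?E"
    "(\<lambda>x. x + u x *\<^sub>R w) ` (convex hull V) \<subseteq> convex hull ?E"
    unfolding convex_hull_shear_image[OF l] convex_hull_shear_image[OF u] by (simp_all add: hull_mono)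
  then have seg: "closed_segment (x + l x *\<^sub>R w) (x + u x *\<^sub>R w) \<subseteq> convex hull ?E"
    if "x \<in> convex hull V" for x
    using that by (intro closed_segment_subset) auto
  show "slab_over w (convex hull V) l u \<subseteq> convex hull ?E"
  proof
    fix y
    assume "y \<in> slab_over w (convex hull V) l u"
    then obtain x t where x: "x \<in> convex hull V" "y = x + t *\<^sub>R w" "l x \<le> t" "t \<le> u x"
      unfolding mem_slab_over by blast
    then have "y \<in> closed_segment (x + l x *\<^sub>R w) (x + u x *\<^sub>R w)"
      unfolding closed_segment_along[OF le[OF x(1)]] by (intro image_eqI[of _ _ t]) auto
    then show "y \<in> convex hull ?E"
      using seg[OF x(1)] by blast
  qed
  have "?E \<subseteq> slab_over w (convex hull V) l u"
    using graph_subset_slab_over[of "convex hull V" l u w, OF le] hull_subset[of V convex] by blast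
  then show "convex hull ?E \<subseteq> slab_over w (convex hull V) l u"
    by (intro hull_minimal convex_slab_over[OF convex_convex_hull l u])
qed

lemma slab_over_lower_supporting_hyperplane:
  fixes w :: "'a::real_inner"
  assumes le: "\<And>x. x \<in> A \<Longrightarrow> l x \<le> u x" and hyp: "\<And>x. x \<in> A \<Longrightarrow> a \<bullet> (x + l x *\<^sub>R w) = c"
    and "a \<bullet> w < 0"
  shows "\<And>y. y \<in> slab_over w A l u \<Longrightarrow> a \<bullet> y \<le> c"
    and "slab_over w A l u \<inter> {y. a \<bullet> y = c} = (\<lambda>x. x + l x *\<^sub>R w) ` A"
proof -
  have level: "a \<bullet> (x + t *\<^sub>R w) = c + (t - l x) * (a \<bullet> w)" if "x \<in> A" for x t
    using hyp[OF that] by (simp add: inner_add_right algebra_simps)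
  show "a \<bullet> y \<le> c" if "y \<in> slab_over w A l u" for y
    using that \<open>a \<bullet> w < 0\<close> unfolding mem_slab_over by (auto simp: level mult_nonneg_nonpos)
  have "y \<in> (\<lambda>x. x + l x *\<^sub>R w) ` A" if "y \<in> slab_over w A l u" "a \<bullet> y = c" for y
    using that \<open>a \<bullet> w < 0\<close> unfolding mem_slab_over by (auto simp: level)
  then show "slab_over w A l u \<inter> {y. a \<bullet> y = c} = (\<lambda>x. x + l x *\<^sub>R w) ` A"
    using graph_subset_slab_over(1)[of A l u w, OF le] hyp by auto
qed

lemma slab_over_argmax_lower:
  fixes w :: "'a::real_inner"
  assumes le: "\<And>x. x \<in> A \<Longrightarrow> l x \<le> u x" and "psi \<bullet> w < 0" and y: "y \<in> slab_over w A l u"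
    and max: "\<And>q. q \<in> slab_over w A l u \<Longrightarrow> psi \<bullet> q \<le> psi \<bullet> y"
  shows "y \<in> (\<lambda>x. x + l x *\<^sub>R w) ` A"
proof -
  obtain x t where x: "x \<in> A" "y = x + t *\<^sub>R w" "l x \<le> t"
    using y unfolding mem_slab_over by blast
  have "psi \<bullet> (x + l x *\<^sub>R w) \<le> psi \<bullet> y"
    using max graph_subset_slab_over(1)[of A l u w, OF le] x(1) by blast
  then have "(l x - t) * (psi \<bullet> w) \<le> 0"
    unfolding x(2) by (simp add: inner_add_right algebra_simps)
  then have "t = l x"
    using \<open>psi \<bullet> w < 0\<close> x(3) by (simp add: mult_le_0_iff)
  then show ?thesis
    using x by blast
qed

lemma facet_dir_slab_over_lower:
  fixes w :: "real^'n::{finite,wellorder}"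
  assumes "convex (slab_over w A l u)" and le: "\<And>x. x \<in> A \<Longrightarrow> l x \<le> u x"
    and hyp: "\<And>x. x \<in> A \<Longrightarrow> a \<bullet> (x + l x *\<^sub>R w) = c" and "a \<bullet> w < 0" and "A \<noteq> {}"
    and dim: "aff_dim ((\<lambda>x. x + l x *\<^sub>R w) ` A) = aff_dim (slab_over w A l u) - 1"
  shows "facet_dir (slab_over w A l u) ((\<lambda>x. x + l x *\<^sub>R w) ` A) a"
    and "facet_dir (slab_over w A l u) G psi \<Longrightarrow> psi \<bullet> w < 0 \<Longrightarrow> G = (\<lambda>x. x + l x *\<^sub>R w) ` A"
proof -
  let ?S = "slab_over w A l u" and ?B = "(\<lambda>x. x + l x *\<^sub>R w) ` A"
  note supp = slab_over_lower_supporting_hyperplane[OF le hyp \<open>a \<bullet> w < 0\<close>]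
  have "?B face_of ?S"
    using face_of_Int_supporting_hyperplane_le[OF assms(1) supp(1)] supp(2) by simp
  then have B: "?B facet_of ?S"
    unfolding facet_of_def using dim \<open>A \<noteq> {}\<close> by simp
  moreover have "?B = {p \<in> ?S. \<forall>q\<in>?S. a \<bullet> q \<le> a \<bullet> p}"
    using argmax_eq_supporting_hyperplane[OF supp(1)] supp(2) \<open>A \<noteq> {}\<close> by simp
  moreover have "a \<noteq> 0"
    using \<open>a \<bullet> w < 0\<close> by auto
  ultimately show "facet_dir ?S ?B a"
    unfolding facet_dir_def by (intro conjI)
  assume G: "facet_dir ?S G psi" and "psi \<bullet> w < 0"
  then have "G \<subseteq> ?B"
    unfolding facet_dir_def using slab_over_argmax_lower[OF le \<open>psi \<bullet> w < 0\<close>] by auto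
  then show "G = ?B"
    using facet_of_subset_eq[OF _ B] G unfolding facet_dir_def by blast
qed

lemma slab_over_bottom_face:
  fixes A :: "(real^'n::{finite,wellorder}) set"
  assumes "convex (slab_over zvec A l u)" and "\<And>x. x \<in> A \<Longrightarrow> l x \<le> u x"
    and "\<And>x. x \<in> A \<Longrightarrow> a \<bullet> (x + l x *\<^sub>R zvec) = c" and "a \<bullet> zvec < 0" and "A \<noteq> {}"
    and "aff_dim ((\<lambda>x. x + l x *\<^sub>R zvec) ` A) = aff_dim (slab_over zvec A l u) - 1"
  shows "bottom_face (slab_over zvec A l u) ((\<lambda>x. x + l x *\<^sub>R zvec) ` A)"
    and "bottom_face (slab_over zvec A l u) G \<Longrightarrow> G = (\<lambda>x. x + l x *\<^sub>R zvec) ` A"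
proof -
  note lower = facet_dir_slab_over_lower[OF assms]
  show "bottom_face (slab_over zvec A l u) ((\<lambda>x. x + l x *\<^sub>R zvec) ` A)"
    unfolding bottom_face_def using lower(1) \<open>a \<bullet> zvec < 0\<close> by blast
  show "bottom_face (slab_over zvec A l u) G \<Longrightarrow> G = (\<lambda>x. x + l x *\<^sub>R zvec) ` A"
    unfolding bottom_face_def using lower(2) by blast
qed

lemma slab_over_top_face:
  fixes A :: "(real^'n::{finite,wellorder}) set"
  assumes "convex (slab_over zvec A l u)" and "\<And>x. x \<in> A \<Longrightarrow> l x \<le> u x"
    and "\<And>x. x \<in> A \<Longrightarrow> a \<bullet> (x + u x *\<^sub>R zvec) = c" and "a \<bullet> zvec > 0" and "A \<noteq> {}"
    and "aff_dim ((\<lambda>x. x + u x *\<^sub>R zvec) ` A) = aff_dim (slab_over zvec A l u) - 1"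
  shows "top_face (slab_over zvec A l u) ((\<lambda>x. x + u x *\<^sub>R zvec) ` A)"
    and "top_face (slab_over zvec A l u) G \<Longrightarrow> G = (\<lambda>x. x + u x *\<^sub>R zvec) ` A"
proof -
  note lower = facet_dir_slab_over_lower[of "- zvec" A "\<lambda>x. - u x" "\<lambda>x. - l x" a c,
      unfolded slab_over_uminus, simplified]
  show "top_face (slab_over zvec A l u) ((\<lambda>x. x + u x *\<^sub>R zvec) ` A)"
    unfolding top_face_def using lower(1) assms by blast
  show "top_face (slab_over zvec A l u) G \<Longrightarrow> G = (\<lambda>x. x + u x *\<^sub>R zvec) ` A"
    unfolding top_face_def using lower(2) assms by blast
qed

lemma aff_dim_slab_over:
  fixes F :: "'a::euclidean_space set"
  assumes dim: "aff_dim F = DIM('a) - 1" and hyp: "\<And>x. x \<in> F \<Longrightarrow> a \<bullet> x = c" and "a \<bullet> w \<noteq> 0"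
    and l: "\<And>x. x \<in> F \<Longrightarrow> l x < 0" and u: "\<And>x. x \<in> F \<Longrightarrow> 0 \<le> u x"
  shows "aff_dim (slab_over w F l u) = DIM('a)"
proof -
  obtain x where x: "x \<in> F"
    using dim DIM_positive[where 'a='a] by fastforce
  have "affine hull F \<subseteq> {y. a \<bullet> y = c}"
    using hyp by (intro hull_minimal) (auto simp: affine_hyperplane)
  moreover have "a \<bullet> (x + l x *\<^sub>R w) \<noteq> c"
    using hyp[OF x] l[OF x] \<open>a \<bullet> w \<noteq> 0\<close> by (simp add: inner_add_right)
  ultimately have "aff_dim (insert (x + l x *\<^sub>R w) F) = DIM('a)"
    using dim by (auto simp: aff_dim_insert)
  moreover have "insert (x + l x *\<^sub>R w) F \<subseteq> slab_over w F l u"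
  proof -
    have "x + l x *\<^sub>R w \<in> slab_over w F l u"
      using x l[OF x] u[OF x] by (intro slab_over_memI) auto
    moreover have "y + 0 *\<^sub>R w \<in> slab_over w F l u" if "y \<in> F" for y
      using that l[OF that] u[OF that] by (intro slab_over_memI) auto
    ultimately show ?thesis
      by auto
  qed
  ultimately show ?thesis
    using aff_dim_subset aff_dim_le_DIM[of "slab_over w F l u"] by (metis order_antisym)
qed

lemma msum_slab_over_exchange:
  fixes F :: "(real^'n::{finite,wellorder}) set"
  assumes l: "\<And>x. x \<in> F \<Longrightarrow> l x \<le> 0" and u: "\<And>x. x \<in> F \<Longrightarrow> 0 \<le> u x"
  shows "msum (slab_over w F (\<lambda>_. 0) u) (slab_over w F l (\<lambda>_. 0)) = msum (slab_over w F l u) F"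
proof (intro equalityI subsetI)
  fix y
  assume "y \<in> msum (slab_over w F (\<lambda>_. 0) u) (slab_over w F l (\<lambda>_. 0))"
  then obtain f1 t1 f2 t2 where y: "y = (f1 + t1 *\<^sub>R w) + (f2 + t2 *\<^sub>R w)" "f1 \<in> F" "f2 \<in> F"
    and t: "0 \<le> t1" "t1 \<le> u f1" "l f2 \<le> t2" "t2 \<le> 0"
    unfolding msum_def mem_slab_over by blast
  show "y \<in> msum (slab_over w F l u) F"
  proof (cases "t1 + t2 \<le> u f2")
    case True
    then have "f2 + (t1 + t2) *\<^sub>R w \<in> slab_over w F l u"
      using y t by (intro slab_over_memI) auto
    moreover have "y = (f2 + (t1 + t2) *\<^sub>R w) + f1"
      by (simp add: y algebra_simps)
    ultimately show ?thesis
      using y(2) unfolding msum_def by blast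
  next
    case False
    then have "f1 + (t1 + t2) *\<^sub>R w \<in> slab_over w F l u"
      using y t l[OF y(2)] u[OF y(3)] by (intro slab_over_memI) auto
    moreover have "y = (f1 + (t1 + t2) *\<^sub>R w) + f2"
      by (simp add: y algebra_simps)
    ultimately show ?thesis
      using y(3) unfolding msum_def by blast
  qed
next
  fix y
  assume "y \<in> msum (slab_over w F l u) F"
  then obtain x s f where y: "y = (x + s *\<^sub>R w) + f" "x \<in> F" "f \<in> F" and s: "l x \<le> s" "s \<le> u x"
    unfolding msum_def mem_slab_over by blast
  have split: "y = (a + max s 0 *\<^sub>R w) + (b + min s 0 *\<^sub>R w)" if "{a, b} = {x, f}" for a b
  proof -
    have "s *\<^sub>R w = max s 0 *\<^sub>R w + min s 0 *\<^sub>R w"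
      by (simp add: max_def min_def)
    then show ?thesis
      using that by (auto simp: y doubleton_eq_iff algebra_simps)
  qed
  show "y \<in> msum (slab_over w F (\<lambda>_. 0) u) (slab_over w F l (\<lambda>_. 0))"
  proof (cases "s \<le> u f")
    case True
    have "f + max s 0 *\<^sub>R w \<in> slab_over w F (\<lambda>_. 0) u" "x + min s 0 *\<^sub>R w \<in> slab_over w F l (\<lambda>_. 0)"
      using y s True l[OF y(2)] u[OF y(3)] by (intro slab_over_memI; auto)+
    then show ?thesis
      using split[of f x] unfolding msum_def by blast
  next
    case False
    have "x + max s 0 *\<^sub>R w \<in> slab_over w F (\<lambda>_. 0) u" "f + min s 0 *\<^sub>R w \<in> slab_over w F l (\<lambda>_. 0)"
      using y s False l[OF y(3)] u[OF y(2)] u[OF y(3)] by (intro slab_over_memI; auto)+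
    then show ?thesis
      using split[of x f] unfolding msum_def by blast
  qed
qed

lemma polytope_eq_slab_over_bottom_face:
  fixes P F :: "(real^'n::{finite,wellorder}) set"
  assumes P: "polytope P" "aff_dim P = CARD('n)"
    and F: "bottom_face P F" "\<And>G. bottom_face P G \<Longrightarrow> G = F"
    and top: "\<And>G p. top_face P G \<Longrightarrow> p \<in> G \<Longrightarrow> p \<bullet> zvec = h"
  shows "P = slab_over zvec F (\<lambda>_. 0) (\<lambda>x. h - x \<bullet> zvec)"
    and "\<And>p. p \<in> P \<Longrightarrow> p \<bullet> zvec \<le> h"
proof -
  have facet_sub: "G \<subseteq> P" if "facet_dir P G phi" for G phi
    using that unfolding facet_dir_def by blast
  have up: "\<exists>t\<ge>0. p + t *\<^sub>R zvec \<in> P \<and> p \<bullet> zvec + t = h" if p: "p \<in> P" for p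
  proof -
    obtain t G phi where "t \<ge> 0" "facet_dir P G phi" "phi \<bullet> zvec > 0" "p + t *\<^sub>R zvec \<in> G"
      using ray_exits_through_facet[OF P p zvec_nonzero] by blast
    then show ?thesis
      using top[of G "p + t *\<^sub>R zvec"] facet_sub unfolding top_face_def
      by (force simp: inner_add_left)
  qed
  have down: "\<exists>t\<ge>0. p - t *\<^sub>R zvec \<in> F" if p: "p \<in> P" for p
  proof -
    obtain t G phi where "t \<ge> 0" "facet_dir P G phi" "phi \<bullet> - zvec > 0" "p + t *\<^sub>R - zvec \<in> G"
      using ray_exits_through_facet[OF P p] by (metis neg_equal_0_iff_equal zvec_nonzero)
    moreover have "bottom_face P G"
      unfolding bottom_face_def using calculation by auto
    ultimately show ?thesis
      using F(2) by auto
  qed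
  show below: "p \<bullet> zvec \<le> h" if "p \<in> P" for p
    using up[OF that] by force
  show "P = slab_over zvec F (\<lambda>_. 0) (\<lambda>x. h - x \<bullet> zvec)"
  proof (intro equalityI subsetI)
    fix p
    assume "p \<in> P"
    then obtain t where "t \<ge> 0" "p - t *\<^sub>R zvec \<in> F"
      using down by blast
    then show "p \<in> slab_over zvec F (\<lambda>_. 0) (\<lambda>x. h - x \<bullet> zvec)"
      using slab_over_memI[of "p - t *\<^sub>R zvec" F "\<lambda>_. 0" t "\<lambda>x. h - x \<bullet> zvec" zvec] below[OF \<open>p \<in> P\<close>]
      by (simp add: inner_diff_left)
  next
    fix p
    assume "p \<in> slab_over zvec F (\<lambda>_. 0) (\<lambda>x. h - x \<bullet> zvec)"
    then obtain x t where x: "x \<in> F" "p = x + t *\<^sub>R zvec" "0 \<le> t" "t \<le> h - x \<bullet> zvec"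
      unfolding mem_slab_over by blast
    have "x \<in> P"
      using x(1) F(1) facet_sub unfolding bottom_face_def by blast
    then obtain s where s: "s \<ge> 0" "x + s *\<^sub>R zvec \<in> P" "x \<bullet> zvec + s = h"
      using up by blast
    have "p \<in> closed_segment (x + 0 *\<^sub>R zvec) (x + s *\<^sub>R zvec)"
      unfolding closed_segment_along[OF s(1)] using x s by auto
    moreover have "closed_segment (x + 0 *\<^sub>R zvec) (x + s *\<^sub>R zvec) \<subseteq> P"
      using closed_segment_subset polytope_imp_convex[OF P(1)] \<open>x \<in> P\<close> s(2) by simp
    ultimately show "p \<in> P"
      by blast
  qed
qed

lemma ndim_slab_over:
  fixes F :: "(real^'n::{finite,wellorder}) set"
  assumes "ptope F" and dim: "aff_dim F = CARD('n) - 1"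
    and hyp: "\<And>x. x \<in> F \<Longrightarrow> a \<bullet> x = c" and "a \<bullet> zvec \<noteq> 0"
    and l: "\<And>x. l x = v1 \<bullet> x + c1" and u: "\<And>x. u x = v2 \<bullet> x + c2"
    and l_neg: "\<And>x. x \<in> F \<Longrightarrow> l x < 0" and u_nonneg: "\<And>x. x \<in> F \<Longrightarrow> 0 \<le> u x"
  shows "ndim (slab_over zvec F l u)"
proof -
  obtain V where V: "finite V" "V \<noteq> {}" "F = convex hull V"
    using \<open>ptope F\<close> unfolding ptope_def by auto
  define E where "E = (\<lambda>x. x + l x *\<^sub>R zvec) ` V \<union> (\<lambda>x. x + u x *\<^sub>R zvec) ` V"
  have "l x \<le> u x" if "x \<in> convex hull V" for x
    using l_neg[of x] u_nonneg[of x] that V(3) by simp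
  then have "slab_over zvec F l u = convex hull E"
    unfolding V(3) E_def by (rule convex_hull_slab_over[OF l u])
  moreover have "finite E" "E \<noteq> {}"
    using V(1,2) by (simp_all add: E_def)
  ultimately have "ptope (slab_over zvec F l u)"
    unfolding ptope_def by blast
  moreover have "aff_dim (slab_over zvec F l u) = CARD('n)"
    using aff_dim_slab_over[of F a c zvec l u] dim hyp \<open>a \<bullet> zvec \<noteq> 0\<close> l_neg u_nonneg by simp
  ultimately show ?thesis
    unfolding ndim_def by blast
qed

lemma ndim_imp_convex: "ndim P \<Longrightarrow> convex P"
  unfolding ndim_def ptope_def by auto

lemma aff_dim_codim1_imp_nonempty:
  "aff_dim (F :: (real^'n) set) = CARD('n) - 1 \<Longrightarrow> F \<noteq> {}"
  using finite_UNIV_card_ge_0[where 'a='n] by auto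

lemma flat_projection_to_level: "flat ((\<lambda>x. x + (b - x \<bullet> zvec) *\<^sub>R zvec) ` A)"
  unfolding flat_def by (intro exI[of _ b]) (simp add: inner_add_left)

lemma grounded_almost_pillar_slab_below:
  fixes F :: "(real^'n::{finite,wellorder}) set"
  assumes F: "ptope F" "aff_dim F = CARD('n) - 1"
    and hyp: "\<And>x. x \<in> F \<Longrightarrow> a \<bullet> x = c" and "a \<bullet> zvec \<noteq> 0"
    and below: "\<And>x. x \<in> F \<Longrightarrow> b < x \<bullet> zvec"
  shows "grounded (slab_over zvec F (\<lambda>x. b - x \<bullet> zvec) (\<lambda>_. 0))"
    and "almost_pillar (slab_over zvec F (\<lambda>x. b - x \<bullet> zvec) (\<lambda>_. 0))"
proof -
  let ?S = "slab_over zvec F (\<lambda>x. b - x \<bullet> zvec) (\<lambda>_. 0)"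
  let ?B = "(\<lambda>x. x + (b - x \<bullet> zvec) *\<^sub>R zvec) ` F"
  have nd: "ndim ?S"
    using below by (intro ndim_slab_over[OF F hyp \<open>a \<bullet> zvec \<noteq> 0\<close>, of _ "- zvec" b _ 0 0])
      (auto simp: inner_commute)
  then have conv: "convex ?S" and dimS: "aff_dim ?S = CARD('n)"
    by (simp_all add: ndim_imp_convex ndim_def)
  have le: "\<And>x. x \<in> F \<Longrightarrow> b - x \<bullet> zvec \<le> 0"
    using below by (simp add: less_imp_le)
  note F_ne = aff_dim_codim1_imp_nonempty[OF F(2)]
  have "aff_dim ?B = aff_dim F"
    using aff_dim_shear_image_eq[of "\<lambda>x. b - x \<bullet> zvec" "- zvec" b F a c zvec] hyp \<open>a \<bullet> zvec \<noteq> 0\<close>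
    by (simp add: inner_commute)
  then have dimB: "aff_dim ?B = aff_dim ?S - 1"
    using dimS F(2) by simp
  have level: "- zvec \<bullet> (x + (b - x \<bullet> zvec) *\<^sub>R zvec) = - b" for x
    by (simp add: inner_add_right inner_commute)
  have "- zvec \<bullet> zvec < 0"
    by simp
  note bottom = slab_over_bottom_face[OF conv le level this F_ne dimB]
  then show "grounded ?S"
    unfolding grounded_def using nd flat_projection_to_level by blast
  obtain a' c' where hyp': "\<And>x. x \<in> F \<Longrightarrow> a' \<bullet> x = c'" and "a' \<bullet> zvec > 0"
  proof (cases "a \<bullet> zvec > 0")
    case True
    then show ?thesis
      using that hyp by blast
  next
    case False
    then show ?thesis
      using that[of "- a" "- c"] hyp \<open>a \<bullet> zvec \<noteq> 0\<close> by simp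
  qed
  moreover have "aff_dim ((\<lambda>x. x + 0 *\<^sub>R zvec) ` F) = aff_dim ?S - 1"
    using dimS F(2) by simp
  ultimately have "top_face ?S F" "\<And>G. top_face ?S G \<Longrightarrow> G = F"
    using slab_over_top_face[OF conv le, of a' c'] F_ne by simp_all
  with bottom show "almost_pillar ?S"
    unfolding almost_pillar_def using nd by blast
qed

lemma pillar_slab_between:
  fixes F :: "(real^'n::{finite,wellorder}) set"
  assumes F: "ptope F" "aff_dim F = CARD('n) - 1"
    and hyp: "\<And>x. x \<in> F \<Longrightarrow> a \<bullet> x = c" and "a \<bullet> zvec \<noteq> 0"
    and below: "\<And>x. x \<in> F \<Longrightarrow> b < x \<bullet> zvec" and above: "\<And>x. x \<in> F \<Longrightarrow> x \<bullet> zvec \<le> h"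
  shows "pillar (slab_over zvec F (\<lambda>x. b - x \<bullet> zvec) (\<lambda>x. h - x \<bullet> zvec))"
proof -
  let ?B = "(\<lambda>x. x + (b - x \<bullet> zvec) *\<^sub>R zvec) ` F"
  have nd: "ndim (slab_over zvec F (\<lambda>x. b - x \<bullet> zvec) (\<lambda>x. h - x \<bullet> zvec))"
    using below above
    by (intro ndim_slab_over[OF F hyp \<open>a \<bullet> zvec \<noteq> 0\<close>, of _ "- zvec" b _ "- zvec" h])
      (auto simp: inner_commute)
  have "h - b > 0"
    using aff_dim_codim1_imp_nonempty[OF F(2)] below above by force
  have "slab_over zvec F (\<lambda>x. b - x \<bullet> zvec) (\<lambda>x. h - x \<bullet> zvec)
      = msum ?B (closed_segment 0 ((h - b) *\<^sub>R zvec))"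
    using \<open>h - b > 0\<close> by (intro slab_over_constant_height) auto
  moreover obtain V where V: "finite V" "V \<noteq> {}" "F = convex hull V"
    using F(1) unfolding ptope_def by auto
  have "?B = convex hull ((\<lambda>x. x + (b - x \<bullet> zvec) *\<^sub>R zvec) ` V)"
    unfolding V(3) by (rule convex_hull_shear_image[of _ "- zvec" b]) (simp add: inner_commute)
  then have "ptope ?B"
    unfolding ptope_def using V(1,2) by blast
  ultimately show ?thesis
    unfolding pillar_def using nd \<open>h - b > 0\<close> flat_projection_to_level by blast
qed

lemma facet_dir_level:
  assumes "facet_dir P F phi"
  obtains m where "\<And>x. x \<in> F \<Longrightarrow> phi \<bullet> x = m"
proof -
  have "phi \<bullet> x = phi \<bullet> y" if "x \<in> F" "y \<in> F" for x y
    using assms that unfolding facet_dir_def by (blast intro: antisym)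
  then show ?thesis
    using that by blast
qed

lemma bottom_faceE:
  fixes P F :: "(real^'n::{finite,wellorder}) set"
  assumes P: "polytope P" "aff_dim P = CARD('n)" and "bottom_face P F"
  obtains phi m where "ptope F" "aff_dim F = CARD('n) - 1" "F \<subseteq> P"
    "\<And>x. x \<in> F \<Longrightarrow> phi \<bullet> x = m" "phi \<bullet> zvec \<noteq> 0"
proof -
  obtain phi where phi: "facet_dir P F phi" "phi \<bullet> zvec < 0"
    using \<open>bottom_face P F\<close> unfolding bottom_face_def by blast
  then obtain m where m: "\<And>x. x \<in> F \<Longrightarrow> phi \<bullet> x = m"
    using facet_dir_level by blast
  have "F facet_of P"
    using phi(1) unfolding facet_dir_def by blast
  then have "ptope F" "aff_dim F = CARD('n) - 1" "F \<subseteq> P"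
    using face_of_polytope_polytope[OF P(1)] P(2) facet_of_imp_subset[OF \<open>F facet_of P\<close>]
    by (auto simp: ptope_iff_polytope facet_of_def)
  then show ?thesis
    using that[OF _ _ _ m] phi(2) by simp
qed

lemma compact_inner_lower_bound:
  assumes "compact F"
  obtains b where "\<And>x. x \<in> F \<Longrightarrow> b < x \<bullet> w"
proof -
  have "bounded ((\<lambda>x. x \<bullet> w) ` F)"
    by (intro compact_imp_bounded compact_continuous_image assms continuous_intros)
  then obtain B where "\<And>x. x \<in> F \<Longrightarrow> \<bar>x \<bullet> w\<bar> \<le> B"
    unfolding bounded_real by blast
  then show ?thesis
    using that[of "- B - 1"] by force
qed

theorem lemma3p10:
  fixes P F :: "(real^'n::{finite,wellorder}) set"
  assumes "ptope P" and "aff_dim P = int CARD('n)"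
    and "grounded (reflect P)" and "almost_pillar (reflect P)"
    and "bottom_face P F" and "\<forall>G. bottom_face P G \<longrightarrow> G = F"
  shows "\<exists>Q S. pillar Q \<and> grounded S \<and> almost_pillar S \<and> groth_eq (msum P S) (msum Q F)"
proof -
  \<comment> \<open>Being grounded already gives \<open>reflect P\<close> a unique bottom face.\<close>
  have P: "polytope P"
    using assms(1) ptope_iff_polytope by blast
  obtain h where top: "\<And>G p. top_face P G \<Longrightarrow> p \<in> G \<Longrightarrow> p \<bullet> zvec = h"
    using top_faces_level[OF assms(3)] by blast
  have unique: "\<And>G. bottom_face P G \<Longrightarrow> G = F"
    using assms(6) by blast
  have P_slab: "P = slab_over zvec F (\<lambda>_. 0) (\<lambda>x. h - x \<bullet> zvec)"
    using P assms(2,5) unique top by (rule polytope_eq_slab_over_bottom_face(1))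
  have below_top: "\<And>p. p \<in> P \<Longrightarrow> p \<bullet> zvec \<le> h"
    using P assms(2,5) unique top by (rule polytope_eq_slab_over_bottom_face(2))
  obtain phi m where F: "ptope F" "aff_dim F = CARD('n) - 1" "F \<subseteq> P"
    and hyp: "\<And>x. x \<in> F \<Longrightarrow> phi \<bullet> x = m" and "phi \<bullet> zvec \<noteq> 0"
    using bottom_faceE[OF P assms(2,5)] by blast
  obtain b where below: "\<And>x. x \<in> F \<Longrightarrow> b < x \<bullet> zvec"
    using compact_inner_lower_bound polytope_imp_compact F(1) ptope_iff_polytope by metis
  have above: "\<And>x. x \<in> F \<Longrightarrow> x \<bullet> zvec \<le> h"
    using below_top F(3) by blast
  have "msum P (slab_over zvec F (\<lambda>x. b - x \<bullet> zvec) (\<lambda>_. 0))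
      = msum (slab_over zvec F (\<lambda>x. b - x \<bullet> zvec) (\<lambda>x. h - x \<bullet> zvec)) F"
    unfolding P_slab using below above by (intro msum_slab_over_exchange) (auto simp: less_imp_le)
  then have "groth_eq (msum P (slab_over zvec F (\<lambda>x. b - x \<bullet> zvec) (\<lambda>_. 0)))
      (msum (slab_over zvec F (\<lambda>x. b - x \<bullet> zvec) (\<lambda>x. h - x \<bullet> zvec)) F)"
    using groth_eq_refl by simp
  then show ?thesis
    using grounded_almost_pillar_slab_below[OF F(1,2) hyp \<open>phi \<bullet> zvec \<noteq> 0\<close> below]
      pillar_slab_between[OF F(1,2) hyp \<open>phi \<bullet> zvec \<noteq> 0\<close> below above]
    by blast
qed

end
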